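(* Let $E:[0,\infty)\times\mathbb{R}^2\to\mathbb{R}^2$ and $b:[0,\infty)\times\mathbb{R}^2\to\mathbb{R}$ be continuous, with $b(t,x)\neq 0$ for all $(t,x)$, and set $B(t,x)=b(t,x)\,e_3$. Fix $\Delta t>0$, $T>0$, set $t^n=n\Delta t$ and $N_T=\lfloor T/\Delta t\rfloor$. For each $\varepsilon>0$ let $(x^n_\varepsilon,v^n_\varepsilon)_{0\le n\le N_T}\subset\mathbb{R}^2\times\mathbb{R}^2$ satisfy, for $0\le n\le N_T-1$, the first-order semi-implicit scheme $$\frac{x^{n+1}_\varepsilon-x^n_\varepsilon}{\Delta t}=\frac{v^{n+1}_\varepsilon}{\varepsilon},\qquad \frac{v^{n+1}_\varepsilon-v^n_\varepsilon}{\Delta t}=\frac1\varepsilon\Big(\frac{v^{n+1}_\varepsilon}{\varepsilon}\wedge B(t^n,x^n_\varepsilon)+E(t^n,x^n_\varepsilon)\Big).$$ Assume that for every $1\le n\le N_T$ the family $(x^n_\varepsilon,\varepsilon v^n_\varepsilon)_{\varepsilon>0}$ is bounded uniformly in $\varepsilon$, and that $(x^0_\varepsilon,\varepsilon v^0_\varepsilon)\to(y^0,0)$ as $\varepsilon\to0$. Then for every $0\le n\le N_T$, $x^n_\varepsilon\to y^n$ as $\varepsilon\to0$, where $(y^n)$ is defined by the given $y^0$ and $$\frac{y^{n+1}-y^n}{\Delta t}=U(t^n,y^n),\qquad 0\le n\le N_T-1.$$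
   Context: Vectors of $\mathbb{R}^2$ are identified with vectors $(w_1,w_2,0)$ of $\mathbb{R}^3$, $e_3=(0,0,1)$, and $\wedge$ is the cross product; thus for $w\in\mathbb{R}^2$ and $B=b\,e_3$, $w\wedge B=b\,(w_2,-w_1)\in\mathbb{R}^2$. The guiding-center drift is $U(t,x)=\dfrac{E(t,x)\wedge B(t,x)}{\|B(t,x)\|^2}$. *)

theory Defs
  imports "HOL-Analysis.Analysis"
begin

text \<open>Vectors of R^2 are pairs (w1,w2), identified with (w1,w2,0) in R^3.
  For B = b e3, the cross product w \<and> B is b (w2, -w1).\<close>
definition wedge_e3 :: "real \<times> real \<Rightarrow> real \<Rightarrow> real \<times> real" where
  "wedge_e3 w b = (b * snd w, - (b * fst w))"

text \<open>Guiding-centre drift U = (E \<and> B) / |B|^2 with B = b e3, so |B| = |b|.\<close>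
definition drift :: "(real \<Rightarrow> real \<times> real \<Rightarrow> real \<times> real) \<Rightarrow> (real \<Rightarrow> real \<times> real \<Rightarrow> real)
    \<Rightarrow> real \<Rightarrow> real \<times> real \<Rightarrow> real \<times> real" where
  "drift E b t x = (1 / (norm (b t x))\<^sup>2) *\<^sub>R wedge_e3 (E t x) (b t x)"

end

theory Submission
  imports Defs
begin

text \<open>Write D for the difference quotient of x from step n to n + 1. Multiplying the
  velocity equation by \<open>\<epsilon>\<close> gives \<open>(\<epsilon> v(n+1) - \<epsilon> v(n)) / \<Delta>t = D \<and> B + E\<close>. Since
  \<open>\<epsilon> v(n+1) = \<epsilon>\<^sup>2 D\<close> and x(n+1) is bounded, \<open>\<epsilon> v(n+1) \<rightarrow> 0\<close>; so if also
  \<open>\<epsilon> v(n) \<rightarrow> 0\<close>, the left-hand side vanishes in the limit. As \<open>b \<noteq> 0\<close>, the map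
  \<open>w \<mapsto> w \<and> B\<close> is invertible and D tends to the drift \<open>U(t(n), y(n))\<close>. Induction on n
  carries both \<open>x(n) \<rightarrow> y(n)\<close> and \<open>\<epsilon> v(n) \<rightarrow> 0\<close>.\<close>

lemma wedge_e3_wedge_e3: "wedge_e3 (wedge_e3 w b) c = (- (b * c)) *\<^sub>R w"
  by (simp add: wedge_e3_def prod_eq_iff)

lemma wedge_e3_solve:
  assumes "b \<noteq> 0" and "wedge_e3 w b + e = r"
  shows "w = wedge_e3 (e - r) (1 / b)"
proof -
  have "wedge_e3 (r - e) (1 / b) = - w"
    using assms by (simp flip: assms(2) add: wedge_e3_wedge_e3)
  then have "w = - wedge_e3 (r - e) (1 / b)"
    by simp
  also have "\<dots> = wedge_e3 (e - r) (1 / b)"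
    by (simp add: wedge_e3_def diff_divide_distrib)
  finally show ?thesis .
qed

lemma difference_quotient_eq:
  fixes p q d :: "'a::real_vector"
  assumes "h \<noteq> 0" and "(1 / h) *\<^sub>R (p - q) = d"
  shows "p = q + h *\<^sub>R d"
proof -
  have "p - q = h *\<^sub>R ((1 / h) *\<^sub>R (p - q))"
    using assms(1) by simp
  then show ?thesis
    unfolding assms(2) by (simp add: algebra_simps)
qed

lemma drift_eq_wedge_e3:
  assumes "b t z \<noteq> 0"
  shows "drift E b t z = wedge_e3 (E t z) (1 / b t z)"
  using assms by (simp add: drift_def wedge_e3_def prod_eq_iff power2_eq_square)

lemma tendsto_wedge_e3 [tendsto_intros]:
  assumes "(f \<longlongrightarrow> w) F" and "(g \<longlongrightarrow> c) F"
  shows "((\<lambda>x. wedge_e3 (f x) (g x)) \<longlongrightarrow> wedge_e3 w c) F"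
  unfolding wedge_e3_def using assms by (intro tendsto_intros)

lemma tendsto_scaleR_zero_bounded:
  fixes g :: "'a \<Rightarrow> 'b::real_normed_vector"
  assumes f: "(f \<longlongrightarrow> 0) F" and g: "eventually (\<lambda>x. norm (g x) \<le> C) F"
  shows "((\<lambda>x. f x *\<^sub>R g x) \<longlongrightarrow> 0) F"
proof (rule Lim_null_comparison)
  show "eventually (\<lambda>x. norm (f x *\<^sub>R g x) \<le> \<bar>f x\<bar> * C) F"
    using g by eventually_elim (simp add: mult_left_mono)
  have "((\<lambda>x. \<bar>f x\<bar> * C) \<longlongrightarrow> \<bar>0\<bar> * C) F"
    using f by (intro tendsto_intros)
  then show "((\<lambda>x. \<bar>f x\<bar> * C) \<longlongrightarrow> 0) F"
    by simp
qed

lemma isCont_slice: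
  assumes "continuous_on ({0..} \<times> UNIV) (\<lambda>(t, z). f t z)" and "t \<ge> 0"
  shows "isCont (f t) z"
proof -
  have "continuous_on UNIV (\<lambda>z. (\<lambda>(t, z). f t z) (t, z))"
    by (rule continuous_on_compose2[OF assms(1)]) (use assms(2) in \<open>auto intro!: continuous_intros\<close>)
  then show ?thesis
    by (simp add: continuous_on_eq_continuous_at)
qed

lemma scaled_velocity_tendsto_zero:
  fixes x x' v' :: "real \<Rightarrow> 'a::real_normed_vector"
  assumes dt_pos: "dt > 0"
    and x_lim: "(x \<longlongrightarrow> y) (at_right 0)"
    and x'_bounded: "\<And>\<epsilon>. \<epsilon> > 0 \<Longrightarrow> norm (x' \<epsilon>) \<le> C"
    and scheme_x: "\<And>\<epsilon>. \<epsilon> > 0 \<Longrightarrow> (1 / dt) *\<^sub>R (x' \<epsilon> - x \<epsilon>) = (1 / \<epsilon>) *\<^sub>R v' \<epsilon>"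
  shows "((\<lambda>\<epsilon>. \<epsilon> *\<^sub>R v' \<epsilon>) \<longlongrightarrow> 0) (at_right 0)"
proof -
  have pos: "eventually (\<lambda>\<epsilon>::real. \<epsilon> > 0) (at_right 0)"
    by (simp add: eventually_at_right_less)
  have v'_eq: "\<epsilon> *\<^sub>R v' \<epsilon> = (\<epsilon>\<^sup>2 / dt) *\<^sub>R x' \<epsilon> - (\<epsilon>\<^sup>2 / dt) *\<^sub>R x \<epsilon>" if "\<epsilon> > 0" for \<epsilon>
  proof -
    have "\<epsilon> *\<^sub>R v' \<epsilon> = \<epsilon>\<^sup>2 *\<^sub>R ((1 / \<epsilon>) *\<^sub>R v' \<epsilon>)"
      using that by (simp add: power2_eq_square)
    also have "\<dots> = (\<epsilon>\<^sup>2 / dt) *\<^sub>R (x' \<epsilon> - x \<epsilon>)"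
      by (simp flip: scheme_x[OF that])
    finally show ?thesis
      by (simp add: algebra_simps)
  qed
  have "((\<lambda>\<epsilon>. \<epsilon>\<^sup>2 / dt) \<longlongrightarrow> 0\<^sup>2 / dt) (at_right 0)"
    using dt_pos by (intro tendsto_intros) auto
  then have square_lim: "((\<lambda>\<epsilon>. \<epsilon>\<^sup>2 / dt) \<longlongrightarrow> 0) (at_right 0)"
    by simp
  have "((\<lambda>\<epsilon>. (\<epsilon>\<^sup>2 / dt) *\<^sub>R x' \<epsilon>) \<longlongrightarrow> 0) (at_right 0)"
    using square_lim eventually_mono[OF pos x'_bounded] by (rule tendsto_scaleR_zero_bounded)
  moreover have "((\<lambda>\<epsilon>. (\<epsilon>\<^sup>2 / dt) *\<^sub>R x \<epsilon>) \<longlongrightarrow> 0 *\<^sub>R y) (at_right 0)"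
    by (intro tendsto_intros square_lim x_lim)
  ultimately have "((\<lambda>\<epsilon>. (\<epsilon>\<^sup>2 / dt) *\<^sub>R x' \<epsilon> - (\<epsilon>\<^sup>2 / dt) *\<^sub>R x \<epsilon>) \<longlongrightarrow> 0 - 0 *\<^sub>R y)
      (at_right 0)"
    by (rule tendsto_diff)
  then show ?thesis
    by (simp add: tendsto_cong[OF eventually_mono[OF pos v'_eq]])
qed

lemma semi_implicit_step_tendsto:
  fixes x x' v v' :: "real \<Rightarrow> real \<times> real" and e :: "real \<times> real \<Rightarrow> real \<times> real"
    and \<beta> :: "real \<times> real \<Rightarrow> real"
  assumes e_cont: "isCont e y" and \<beta>_cont: "isCont \<beta> y" and \<beta>_nz: "\<And>z. \<beta> z \<noteq> 0"
    and dt_pos: "dt > 0"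
    and x_lim: "(x \<longlongrightarrow> y) (at_right 0)"
    and v_lim: "((\<lambda>\<epsilon>. \<epsilon> *\<^sub>R v \<epsilon>) \<longlongrightarrow> 0) (at_right 0)"
    and x'_bounded: "\<And>\<epsilon>. \<epsilon> > 0 \<Longrightarrow> norm (x' \<epsilon>) \<le> C"
    and scheme_x: "\<And>\<epsilon>. \<epsilon> > 0 \<Longrightarrow> (1 / dt) *\<^sub>R (x' \<epsilon> - x \<epsilon>) = (1 / \<epsilon>) *\<^sub>R v' \<epsilon>"
    and scheme_v: "\<And>\<epsilon>. \<epsilon> > 0 \<Longrightarrow> (1 / dt) *\<^sub>R (v' \<epsilon> - v \<epsilon>) =
        (1 / \<epsilon>) *\<^sub>R (wedge_e3 ((1 / \<epsilon>) *\<^sub>R v' \<epsilon>) (\<beta> (x \<epsilon>)) + e (x \<epsilon>))"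
  shows "(x' \<longlongrightarrow> y + dt *\<^sub>R wedge_e3 (e y) (1 / \<beta> y)) (at_right 0)"
    and "((\<lambda>\<epsilon>. \<epsilon> *\<^sub>R v' \<epsilon>) \<longlongrightarrow> 0) (at_right 0)"
proof -
  show v'_lim: "((\<lambda>\<epsilon>. \<epsilon> *\<^sub>R v' \<epsilon>) \<longlongrightarrow> 0) (at_right 0)"
    using dt_pos x_lim x'_bounded scheme_x by (rule scaled_velocity_tendsto_zero)
  define D where "D \<epsilon> = (1 / \<epsilon>) *\<^sub>R v' \<epsilon>" for \<epsilon>
  define R where "R \<epsilon> = (1 / dt) *\<^sub>R (\<epsilon> *\<^sub>R v' \<epsilon> - \<epsilon> *\<^sub>R v \<epsilon>)" for \<epsilon>
  have "(R \<longlongrightarrow> (1 / dt) *\<^sub>R (0 - 0)) (at_right 0)"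
    unfolding R_def by (intro tendsto_intros v_lim v'_lim)
  then have R_lim: "(R \<longlongrightarrow> 0) (at_right 0)"
    by simp
  have D_eq: "D \<epsilon> = wedge_e3 (e (x \<epsilon>) - R \<epsilon>) (1 / \<beta> (x \<epsilon>))" if "\<epsilon> > 0" for \<epsilon>
  proof (rule wedge_e3_solve[OF \<beta>_nz])
    have "R \<epsilon> = \<epsilon> *\<^sub>R ((1 / dt) *\<^sub>R (v' \<epsilon> - v \<epsilon>))"
      by (simp add: R_def algebra_simps)
    then show "wedge_e3 (D \<epsilon>) (\<beta> (x \<epsilon>)) + e (x \<epsilon>) = R \<epsilon>"
      using that by (simp add: scheme_v D_def)
  qed
  have x'_eq: "x' \<epsilon> = x \<epsilon> + dt *\<^sub>R D \<epsilon>" if "\<epsilon> > 0" for \<epsilon>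
    using dt_pos scheme_x[OF that, folded D_def] by (intro difference_quotient_eq) auto
  have "((\<lambda>\<epsilon>. x \<epsilon> + dt *\<^sub>R wedge_e3 (e (x \<epsilon>) - R \<epsilon>) (1 / \<beta> (x \<epsilon>)))
      \<longlongrightarrow> y + dt *\<^sub>R wedge_e3 (e y - 0) (1 / \<beta> y)) (at_right 0)"
    by (intro tendsto_intros x_lim R_lim isCont_tendsto_compose[OF e_cont]
        isCont_tendsto_compose[OF \<beta>_cont] \<beta>_nz)
  moreover have "eventually (\<lambda>\<epsilon>. x \<epsilon> + dt *\<^sub>R wedge_e3 (e (x \<epsilon>) - R \<epsilon>) (1 / \<beta> (x \<epsilon>)) = x' \<epsilon>)
      (at_right 0)"
    using eventually_at_right_less by eventually_elim (simp add: x'_eq D_eq)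
  ultimately show "(x' \<longlongrightarrow> y + dt *\<^sub>R wedge_e3 (e y) (1 / \<beta> y)) (at_right 0)"
    by (simp add: tendsto_cong)
qed

theorem proposition3p1:
  fixes E :: "real \<Rightarrow> real \<times> real \<Rightarrow> real \<times> real"
    and b :: "real \<Rightarrow> real \<times> real \<Rightarrow> real"
    and dt T :: real
    and x v :: "real \<Rightarrow> nat \<Rightarrow> real \<times> real"
    and y :: "nat \<Rightarrow> real \<times> real"
    and y0 :: "real \<times> real"
  assumes E_cont: "continuous_on ({0..} \<times> UNIV) (\<lambda>(t, z). E t z)"
    and b_cont: "continuous_on ({0..} \<times> UNIV) (\<lambda>(t, z). b t z)"
    and b_nz: "\<And>t z. t \<ge> 0 \<Longrightarrow> b t z \<noteq> 0"
    and dt_pos: "dt > 0" and T_pos: "T > 0"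
    and scheme_x: "\<And>\<epsilon> n. \<epsilon> > 0 \<Longrightarrow> n < nat \<lfloor>T / dt\<rfloor> \<Longrightarrow>
        (1 / dt) *\<^sub>R (x \<epsilon> (Suc n) - x \<epsilon> n) = (1 / \<epsilon>) *\<^sub>R v \<epsilon> (Suc n)"
    and scheme_v: "\<And>\<epsilon> n. \<epsilon> > 0 \<Longrightarrow> n < nat \<lfloor>T / dt\<rfloor> \<Longrightarrow>
        (1 / dt) *\<^sub>R (v \<epsilon> (Suc n) - v \<epsilon> n) =
        (1 / \<epsilon>) *\<^sub>R (wedge_e3 ((1 / \<epsilon>) *\<^sub>R v \<epsilon> (Suc n)) (b (real n * dt) (x \<epsilon> n))
                        + E (real n * dt) (x \<epsilon> n))"
    and bounded: "\<And>n. 1 \<le> n \<Longrightarrow> n \<le> nat \<lfloor>T / dt\<rfloor> \<Longrightarrow>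
        \<exists>C. \<forall>\<epsilon>>0. norm (x \<epsilon> n) \<le> C \<and> norm (\<epsilon> *\<^sub>R v \<epsilon> n) \<le> C"
    and init: "((\<lambda>\<epsilon>. (x \<epsilon> 0, \<epsilon> *\<^sub>R v \<epsilon> 0)) \<longlongrightarrow> (y0, 0)) (at_right 0)"
    and y_0: "y 0 = y0"
    and y_rec: "\<And>n. n < nat \<lfloor>T / dt\<rfloor> \<Longrightarrow>
        (1 / dt) *\<^sub>R (y (Suc n) - y n) = drift E b (real n * dt) (y n)"
  shows "\<forall>n \<le> nat \<lfloor>T / dt\<rfloor>. ((\<lambda>\<epsilon>. x \<epsilon> n) \<longlongrightarrow> y n) (at_right 0)"
proof -
  have "((\<lambda>\<epsilon>. x \<epsilon> n) \<longlongrightarrow> y n) (at_right 0) \<and> ((\<lambda>\<epsilon>. \<epsilon> *\<^sub>R v \<epsilon> n) \<longlongrightarrow> 0) (at_right 0)"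
    if "n \<le> nat \<lfloor>T / dt\<rfloor>" for n
    using that
  proof (induction n)
    case 0
    show ?case
      using tendsto_fst[OF init] tendsto_snd[OF init] y_0 by simp
  next
    case (Suc n)
    define t where "t = real n * dt"
    have t: "t \<ge> 0" and n: "n < nat \<lfloor>T / dt\<rfloor>"
      using dt_pos Suc.prems by (auto simp: t_def)
    have X: "((\<lambda>\<epsilon>. x \<epsilon> n) \<longlongrightarrow> y n) (at_right 0)"
      and W: "((\<lambda>\<epsilon>. \<epsilon> *\<^sub>R v \<epsilon> n) \<longlongrightarrow> 0) (at_right 0)"
      using Suc by simp_all
    obtain C where C: "\<And>\<epsilon>. \<epsilon> > 0 \<Longrightarrow> norm (x \<epsilon> (Suc n)) \<le> C"
      using bounded[of "Suc n"] Suc.prems by auto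
    have "y (Suc n) = y n + dt *\<^sub>R drift E b t (y n)"
      using dt_pos y_rec[OF n, folded t_def] by (intro difference_quotient_eq) auto
    also have "\<dots> = y n + dt *\<^sub>R wedge_e3 (E t (y n)) (1 / b t (y n))"
      using b_nz[OF t] by (simp add: drift_eq_wedge_e3)
    finally have y_Suc: "y (Suc n) = \<dots>" .
    show ?case
      using semi_implicit_step_tendsto[where x = "\<lambda>\<epsilon>. x \<epsilon> n" and x' = "\<lambda>\<epsilon>. x \<epsilon> (Suc n)"
          and v = "\<lambda>\<epsilon>. v \<epsilon> n" and v' = "\<lambda>\<epsilon>. v \<epsilon> (Suc n)",
          OF isCont_slice[OF E_cont t] isCont_slice[OF b_cont t] b_nz[OF t] dt_pos
          X W C scheme_x[OF _ n] scheme_v[OF _ n, folded t_def]]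
      unfolding y_Suc by simp
  qed
  then show ?thesis
    by blast
qed

end
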